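(* Let $n\ge 2$ and let $G=K_{1,n}$ be the star with center $v_0$ and leaves $v_1,\dots,v_n$, where the edge $v_0v_j$ has weight $w_j\in(0,1)$. Then \[\operatorname{eptw}(G)=\min_{1\le i\le n}\left(\frac{1}{w_i}+\frac{1}{1-W_i}\right),\qquad W_i=\prod_{j\ne i}(1-w_j).\]
   Context: Let $G$ be a finite simple graph in which each edge $uv$ has a weight $w_{uv}\in(0,1)$. Weighted zero forcing: start with a set $B\subseteq V(G)$ of blue vertices, all other vertices white. In each round, simultaneously, for every blue vertex $u$ that has exactly one white neighbor $v$ (with respect to the coloring at the start of the round), $u$ attempts to force $v$, succeeding with probability $w_{uv}$, all attempts being independent; a white vertex becomes blue at the end of the round if at least one attempt on it succeeds. $B$ is a weighted zero forcing set of $G$ if this process can eventually color all of $V(G)$ blue (equivalently, $B$ is a zero forcing set of the underlying unweighted graph under the standard rule); $\operatorname{Z}(G)$ is the minimum size of such a set. $\operatorname{ptw}(G,B)$ is the random variable giving the round in which the last white vertex becomes blue ($0$ if $B=V(G)$); $\operatorname{eptw}(G,B)=\mathbb{E}[\operatorname{ptw}(G,B)]$; $\operatorname{eptw}(G)=\min\{\operatorname{eptw}(G,B): B$ a weighted zero forcing set with $|B|=\operatorname{Z}(G)\}$. *)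

theory Defs
  imports "HOL-Probability.Probability"
begin

text \<open>A finite simple graph is given by a vertex set V and a symmetric irreflexive
edge relation E; edge weights by a function w (w u v is the weight of edge uv).\<close>

definition white_nbrs :: "'a set \<Rightarrow> ('a \<Rightarrow> 'a \<Rightarrow> bool) \<Rightarrow> 'a set \<Rightarrow> 'a \<Rightarrow> 'a set" where
  "white_nbrs V E B u = {v \<in> V. E u v \<and> v \<notin> B}"

definition can_force :: "'a set \<Rightarrow> ('a \<Rightarrow> 'a \<Rightarrow> bool) \<Rightarrow> 'a set \<Rightarrow> 'a \<Rightarrow> 'a \<Rightarrow> bool" where
  "can_force V E B u v \<longleftrightarrow> u \<in> B \<and> white_nbrs V E B u = {v}"

definition zf_step :: "'a set \<Rightarrow> ('a \<Rightarrow> 'a \<Rightarrow> bool) \<Rightarrow> 'a set \<Rightarrow> 'a set" where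
  "zf_step V E B = B \<union> {v. \<exists>u. can_force V E B u v}"

definition is_zfs :: "'a set \<Rightarrow> ('a \<Rightarrow> 'a \<Rightarrow> bool) \<Rightarrow> 'a set \<Rightarrow> bool" where
  "is_zfs V E B \<longleftrightarrow> B \<subseteq> V \<and> (\<exists>k. (zf_step V E ^^ k) B = V)"

definition zf_number :: "'a set \<Rightarrow> ('a \<Rightarrow> 'a \<Rightarrow> bool) \<Rightarrow> nat" where
  "zf_number V E = (LEAST k. \<exists>B. is_zfs V E B \<and> card B = k)"

text \<open>Probability space of all forcing attempts: coin (k,u,v) says whether the attempt
of u to force v in round k+1 succeeds; all independent, success probability w u v.\<close>
definition coin_space :: "('a \<Rightarrow> 'a \<Rightarrow> real) \<Rightarrow> (nat \<times> 'a \<times> 'a \<Rightarrow> bool) measure" where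
  "coin_space w = PiM UNIV (\<lambda>(k, u, v). measure_pmf (bernoulli_pmf (w u v)))"

fun blue_at :: "'a set \<Rightarrow> ('a \<Rightarrow> 'a \<Rightarrow> bool) \<Rightarrow> 'a set \<Rightarrow> (nat \<times> 'a \<times> 'a \<Rightarrow> bool) \<Rightarrow> nat \<Rightarrow> 'a set" where
  "blue_at V E B \<omega> 0 = B"
| "blue_at V E B \<omega> (Suc k) =
     blue_at V E B \<omega> k \<union> {v. \<exists>u. can_force V E (blue_at V E B \<omega> k) u v \<and> \<omega> (k, u, v)}"

definition ptw :: "'a set \<Rightarrow> ('a \<Rightarrow> 'a \<Rightarrow> bool) \<Rightarrow> 'a set \<Rightarrow> (nat \<times> 'a \<times> 'a \<Rightarrow> bool) \<Rightarrow> ennreal" where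
  "ptw V E B \<omega> = (if \<exists>k. blue_at V E B \<omega> k = V
      then of_nat (LEAST k. blue_at V E B \<omega> k = V) else \<infinity>)"

definition eptw_set :: "'a set \<Rightarrow> ('a \<Rightarrow> 'a \<Rightarrow> bool) \<Rightarrow> ('a \<Rightarrow> 'a \<Rightarrow> real) \<Rightarrow> 'a set \<Rightarrow> ennreal" where
  "eptw_set V E w B = (\<integral>\<^sup>+ \<omega>. ptw V E B \<omega> \<partial>coin_space w)"

definition eptw :: "'a set \<Rightarrow> ('a \<Rightarrow> 'a \<Rightarrow> bool) \<Rightarrow> ('a \<Rightarrow> 'a \<Rightarrow> real) \<Rightarrow> ennreal" where
  "eptw V E w = (INF B \<in> {B. is_zfs V E B \<and> card B = zf_number V E}. eptw_set V E w B)"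

text \<open>The star K_{1,n}: centre 0, leaves 1..n.\<close>
definition star_V :: "nat \<Rightarrow> nat set" where "star_V n = {0..n}"
definition star_E :: "nat \<Rightarrow> nat \<Rightarrow> nat \<Rightarrow> bool" where
  "star_E n i j \<longleftrightarrow> (i = 0 \<and> 1 \<le> j \<and> j \<le> n) \<or> (j = 0 \<and> 1 \<le> i \<and> i \<le> n)"
definition star_w :: "(nat \<Rightarrow> real) \<Rightarrow> nat \<Rightarrow> nat \<Rightarrow> real" where
  "star_w ww i j = (if i = 0 then ww j else ww i)"

end

theory Submission
  imports Defs
begin

(* Minimum zero forcing sets of K_{1,n} are exactly the sets of all leaves but one: only the centre
   can force a leaf, and it cannot do so while two leaves are white.  Starting from the set B_i of
   all leaves but v_i, the centre turns blue in the first round in which one of the other leaves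
   succeeds, a geometric waiting time with success probability 1 - W_i; afterwards the centre
   forces v_i after a geometric waiting time with success probability w_i.  Hence
   eptw(G, B_i) = 1/(1 - W_i) + 1/w_i, and eptw(G) is the minimum of these values. *)

(* The number of trials up to and including the first success of p (\<infinity> if there is none),
   written as a sum of indicators of "no success yet" so that its expectation is the sum of the
   tail probabilities. *)
definition waiting_time :: "(nat \<Rightarrow> bool) \<Rightarrow> ennreal" where
  "waiting_time p = (\<Sum>k. of_bool (\<forall>r<k. \<not> p r))"

lemma suminf_one_ennreal: "(\<Sum>k::nat. 1 :: ennreal) = \<infinity>"
proof -
  have "of_nat N \<le> (\<Sum>k::nat. 1 :: ennreal)" for N
    using sum_le_suminf[of "\<lambda>_. 1 :: ennreal" "{..<N}"] by simp
  then have "(SUP N. of_nat N :: ennreal) \<le> (\<Sum>k::nat. 1 :: ennreal)"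
    by (rule SUP_least)
  then show ?thesis
    by (simp add: ennreal_SUP_of_nat_eq_top top_unique)
qed

lemma all_less_not_iff_le_Least:
  fixes p :: "nat \<Rightarrow> bool"
  assumes "\<exists>r. p r"
  shows "(\<forall>r<k. \<not> p r) \<longleftrightarrow> k \<le> (LEAST r. p r)"
proof
  assume "\<forall>r<k. \<not> p r"
  then show "k \<le> (LEAST r. p r)"
    using assms LeastI_ex[of p] not_le by blast
next
  assume "k \<le> (LEAST r. p r)"
  then show "\<forall>r<k. \<not> p r"
    using not_less_Least order.strict_trans2 by blast
qed

lemma waiting_time_eq:
  "waiting_time p = (if \<exists>r. p r then of_nat (Suc (LEAST r. p r)) else \<infinity>)"
proof (cases "\<exists>r. p r")
  case True
  define T where "T = (LEAST r. p r)"
  have "waiting_time p = (\<Sum>k. of_bool (k \<le> T))"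
    unfolding waiting_time_def T_def all_less_not_iff_le_Least[OF True] ..
  also have "\<dots> = (\<Sum>k\<le>T. of_bool (k \<le> T))"
    by (rule suminf_finite) auto
  also have "\<dots> = of_nat (Suc T)"
    by simp
  finally show ?thesis
    using True by (simp add: T_def)
qed (simp add: waiting_time_def suminf_one_ennreal)

lemma waiting_time_eq_Least_less:
  "waiting_time p = (if \<exists>k. \<exists>r<k. p r then of_nat (LEAST k. \<exists>r<k. p r) else \<infinity>)"
proof (cases "\<exists>r. p r")
  case True
  have "(LEAST k. \<exists>r<k. p r) = Suc (LEAST r. p r)"
  proof (rule Least_equality)
    show "\<exists>r<Suc (LEAST r. p r). p r"
      using True LeastI_ex[of p] by blast
    show "Suc (LEAST r. p r) \<le> k" if "\<exists>r<k. p r" for k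
      using that Least_le[of p] by (meson Suc_leI le_less_trans)
  qed
  with True show ?thesis
    by (auto simp: waiting_time_eq)
qed (simp add: waiting_time_eq)

lemma waiting_time_shift:
  "waiting_time (\<lambda>s. t \<le> s \<and> p s) = of_nat t + waiting_time (\<lambda>m. p (t + m))"
proof (cases "\<exists>m. p (t + m)")
  case True
  have "(LEAST s. t \<le> s \<and> p s) = t + (LEAST m. p (t + m))"
  proof (rule Least_equality)
    show "t \<le> t + (LEAST m. p (t + m)) \<and> p (t + (LEAST m. p (t + m)))"
      using True LeastI_ex[of "\<lambda>m. p (t + m)"] by simp
    show "t + (LEAST m. p (t + m)) \<le> s" if "t \<le> s \<and> p s" for s
    proof -
      have "(LEAST m. p (t + m)) \<le> s - t"
        by (rule Least_le) (use that in simp)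
      then show ?thesis
        using that by linarith
    qed
  qed
  moreover have "\<exists>s. t \<le> s \<and> p s"
    using True le_add1 by blast
  ultimately show ?thesis
    using True by (simp add: waiting_time_eq)
next
  case False
  then have "\<not> (\<exists>s. t \<le> s \<and> p s)"
    by (metis le_add_diff_inverse)
  with False show ?thesis
    by (simp add: waiting_time_eq)
qed

lemma waiting_time_after_first:
  "waiting_time (\<lambda>s. (\<exists>r<s. a r) \<and> c s) =
     waiting_time a + (\<Sum>r. of_bool (a r \<and> (\<forall>s<r. \<not> a s)) * waiting_time (\<lambda>m. c (Suc r + m)))"
proof (cases "\<exists>r. a r")
  case True
  define T where "T = (LEAST r. a r)"
  have first_iff: "a r \<and> (\<forall>s<r. \<not> a s) \<longleftrightarrow> r = T" for r
    using True LeastI_ex[of a] Least_le[of a r] all_less_not_iff_le_Least[OF True, of r]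
    unfolding T_def by auto
  have "(\<exists>r<s. a r) \<longleftrightarrow> Suc T \<le> s" for s
    using all_less_not_iff_le_Least[OF True, of s] unfolding T_def by auto
  then have "waiting_time (\<lambda>s. (\<exists>r<s. a r) \<and> c s) = of_nat (Suc T) + waiting_time (\<lambda>m. c (Suc T + m))"
    by (simp add: waiting_time_shift)
  also have "waiting_time (\<lambda>m. c (Suc T + m)) =
      (\<Sum>r. of_bool (a r \<and> (\<forall>s<r. \<not> a s)) * waiting_time (\<lambda>m. c (Suc r + m)))"
    by (subst suminf_finite[of "{T}"]) (auto simp: first_iff)
  finally show ?thesis
    using True by (simp add: waiting_time_eq T_def)
qed (simp add: waiting_time_eq)

lemma suminf_ennreal_geometric:
  fixes c x :: real
  assumes "0 \<le> c" "0 \<le> x" "x < 1"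
  shows "(\<Sum>k. ennreal (c * x ^ k)) = ennreal (c / (1 - x))"
proof -
  have "(\<lambda>k. c * x ^ k) sums (c * (1 / (1 - x)))"
    using assms by (intro sums_mult geometric_sums) simp
  then show ?thesis
    using assms by (simp add: sums_unique[symmetric] suminf_ennreal2 sums_summable)
qed

lemma suminf_geometric_two_phases:
  fixes W q :: real
  assumes W: "0 \<le> W" "W < 1" and q: "0 < q" "q \<le> 1"
  shows "(\<Sum>k. ennreal (W ^ k)) + (\<Sum>r. \<Sum>m. ennreal (W ^ r * (1 - W) * (1 - q) ^ m)) =
    ennreal (1 / q + 1 / (1 - W))"
proof -
  have first_phase: "(\<Sum>k. ennreal (W ^ k)) = ennreal (1 / (1 - W))"
    by (rule suminf_ennreal_geometric[of 1 W, unfolded mult_1]) (use W in auto)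
  have second_phase: "(\<Sum>m. ennreal (W ^ r * (1 - W) * (1 - q) ^ m)) = ennreal ((1 - W) / q * W ^ r)" for r
  proof -
    have "(\<Sum>m. ennreal (W ^ r * (1 - W) * (1 - q) ^ m)) = ennreal (W ^ r * (1 - W) / (1 - (1 - q)))"
      by (rule suminf_ennreal_geometric) (use W q in auto)
    also have "W ^ r * (1 - W) / (1 - (1 - q)) = (1 - W) / q * W ^ r"
      by simp
    finally show ?thesis .
  qed
  have "(\<Sum>r. ennreal ((1 - W) / q * W ^ r)) = ennreal ((1 - W) / q / (1 - W))"
    by (rule suminf_ennreal_geometric) (use W q in auto)
  also have "(1 - W) / q / (1 - W) = 1 / q"
    using W by simp
  finally have "(\<Sum>r. \<Sum>m. ennreal (W ^ r * (1 - W) * (1 - q) ^ m)) = ennreal (1 / q)"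
    by (simp only: second_phase)
  then show ?thesis
    unfolding first_phase using W q by (simp add: ennreal_plus add.commute)
qed

lemma prod_one_minus_less_one:
  fixes p :: "'a \<Rightarrow> real"
  assumes "finite S" "j \<in> S" "\<And>j. j \<in> S \<Longrightarrow> 0 < p j \<and> p j < 1"
  shows "(\<Prod>j\<in>S. 1 - p j) < 1"
proof -
  have "(\<Prod>j\<in>S. 1 - p j) = (1 - p j) * (\<Prod>j\<in>S - {j}. 1 - p j)"
    using assms(1,2) by (simp add: prod.remove)
  also have "\<dots> \<le> (1 - p j) * 1"
    using assms by (intro mult_left_mono prod_le_1) (auto simp: less_imp_le)
  also have "\<dots> < 1"
    using assms(2,3) by simp
  finally show ?thesis .
qed

lemma not_can_force_all_blue: "\<not> can_force V E V u v"
  by (auto simp: can_force_def white_nbrs_def)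

lemma star_E_leaf_iff: "u \<in> {1..n} \<Longrightarrow> star_E n u v \<longleftrightarrow> v = 0"
  by (auto simp: star_E_def)

lemma white_nbrs_star_center: "white_nbrs (star_V n) (star_E n) B 0 = {1..n} - B"
  by (auto simp: white_nbrs_def star_V_def star_E_def)

lemma white_nbrs_star_leaf:
  assumes "u \<in> {1..n}"
  shows "white_nbrs (star_V n) (star_E n) B u = {0} - B"
  unfolding white_nbrs_def star_V_def star_E_leaf_iff[OF assms] by fastforce

lemma can_force_star_leaves_but:
  assumes i: "i \<in> {1..n}"
  defines "S \<equiv> {1..n} - {i}"
  shows "can_force (star_V n) (star_E n) S u v \<longleftrightarrow> u \<in> S \<and> v = 0"
    and "can_force (star_V n) (star_E n) (insert 0 S) u v \<longleftrightarrow> u = 0 \<and> v = i"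
proof -
  have "white_nbrs (star_V n) (star_E n) S u = {0}" if "u \<in> S" for u
    using that by (simp add: white_nbrs_star_leaf insert_Diff_if S_def)
  then show "can_force (star_V n) (star_E n) S u v \<longleftrightarrow> u \<in> S \<and> v = 0"
    by (auto simp: can_force_def)
  have "white_nbrs (star_V n) (star_E n) (insert 0 S) 0 = {i}"
    using i by (simp add: white_nbrs_star_center S_def insert_Diff_if Diff_Diff_Int)
  moreover have "white_nbrs (star_V n) (star_E n) (insert 0 S) u = {}" if "u \<in> S" for u
    using that by (simp add: white_nbrs_star_leaf insert_Diff_if S_def)
  ultimately show "can_force (star_V n) (star_E n) (insert 0 S) u v \<longleftrightarrow> u = 0 \<and> v = i"
    by (auto simp: can_force_def)
qed

lemma blue_at_star_leaves_but:
  assumes i: "i \<in> {1..n}"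
  defines "S \<equiv> {1..n} - {i}"
  shows "blue_at (star_V n) (star_E n) S \<omega> k =
    (if \<exists>s<k. (\<exists>r<s. \<exists>j\<in>S. \<omega> (r, j, 0)) \<and> \<omega> (s, 0, i) then star_V n
     else if \<exists>r<k. \<exists>j\<in>S. \<omega> (r, j, 0) then insert 0 S else S)"
proof (induction k)
  case (Suc k)
  let ?leaf_success = "\<lambda>r. \<exists>j\<in>S. \<omega> (r, j, 0)"
  let ?full = "\<lambda>k. \<exists>s<k. (\<exists>r<s. ?leaf_success r) \<and> \<omega> (s, 0, i)"
  let ?forced = "\<lambda>B. {v. \<exists>u. can_force (star_V n) (star_E n) B u v \<and> \<omega> (k, u, v)}"
  have forced_center: "?forced S = (if ?leaf_success k then {0} else {})"
    using can_force_star_leaves_but(1)[OF i] by (auto simp: S_def)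
  have forced_leaf: "?forced (insert 0 S) = (if \<omega> (k, 0, i) then {i} else {})"
    using can_force_star_leaves_but(2)[OF i] by (auto simp: S_def)
  have "insert 0 S \<union> {i} = star_V n"
    using i by (auto simp: S_def star_V_def)
  consider "?full k" | "\<not> ?full k" "\<exists>r<k. ?leaf_success r" | "\<not> (\<exists>r<k. ?leaf_success r)"
    by blast
  then show ?case
  proof cases
    case 1
    then have "?full (Suc k)"
      using less_SucI by blast
    with 1 Suc.IH show ?thesis
      by (simp add: not_can_force_all_blue)
  next
    case 2
    then have "?full (Suc k) \<longleftrightarrow> \<omega> (k, 0, i)"
      by (auto simp: less_Suc_eq)
    with 2 Suc.IH forced_leaf \<open>insert 0 S \<union> {i} = star_V n\<close> show ?thesis
      by auto
  next
    case 3
    then have "\<not> ?full (Suc k)" "(\<exists>r<Suc k. ?leaf_success r) \<longleftrightarrow> ?leaf_success k"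
      by (auto simp: less_Suc_eq)
    with 3 Suc.IH forced_center show ?thesis
      by auto
  qed
qed simp

lemma blue_at_star_full_iff:
  assumes i: "i \<in> {1..n}"
  shows "blue_at (star_V n) (star_E n) ({1..n} - {i}) \<omega> k = star_V n \<longleftrightarrow>
    (\<exists>s<k. (\<exists>r<s. \<exists>j\<in>{1..n} - {i}. \<omega> (r, j, 0)) \<and> \<omega> (s, 0, i))"
proof -
  have "i \<in> star_V n" "i \<notin> insert 0 ({1..n} - {i})"
    using i by (auto simp: star_V_def)
  then have "insert 0 ({1..n} - {i}) \<noteq> star_V n" "{1..n} - {i} \<noteq> star_V n"
    by blast+
  then show ?thesis
    unfolding blue_at_star_leaves_but[OF i] by simp
qed

lemma ptw_star_leaves_but:
  assumes "i \<in> {1..n}"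
  shows "ptw (star_V n) (star_E n) ({1..n} - {i}) \<omega> =
    waiting_time (\<lambda>s. (\<exists>r<s. \<exists>j\<in>{1..n} - {i}. \<omega> (r, j, 0)) \<and> \<omega> (s, 0, i))"
  unfolding ptw_def blue_at_star_full_iff[OF assms] waiting_time_eq_Least_less ..

lemma zf_step_star_two_white_leaves:
  assumes "a \<in> {1..n}" "b \<in> {1..n}" "a \<noteq> b" "a \<notin> T" "b \<notin> T"
  shows "a \<notin> zf_step (star_V n) (star_E n) T"
proof
  assume "a \<in> zf_step (star_V n) (star_E n) T"
  then obtain u where force: "can_force (star_V n) (star_E n) T u a"
    using assms(4) by (auto simp: zf_step_def)
  then have "star_E n u a"
    by (auto simp: can_force_def white_nbrs_def)
  then have "u = 0"
    using assms(1) by (auto simp: star_E_def)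
  then have "{a, b} \<subseteq> white_nbrs (star_V n) (star_E n) T u"
    using assms by (simp add: white_nbrs_star_center)
  with force assms(3) show False
    by (auto simp: can_force_def)
qed

lemma funpow_zf_step_eq_blue_at:
  "(zf_step V E ^^ k) B = blue_at V E B (\<lambda>_. True) k"
  by (induction k) (simp_all add: zf_step_def)

lemma is_zfs_star_leaves_but:
  assumes "2 \<le> n" "i \<in> {1..n}"
  shows "is_zfs (star_V n) (star_E n) ({1..n} - {i})"
proof -
  have "(if i = 1 then 2 else 1) \<in> {1..n} - {i}"
    using assms by auto
  then have "blue_at (star_V n) (star_E n) ({1..n} - {i}) (\<lambda>_. True) 2 = star_V n"
    unfolding blue_at_star_full_iff[OF assms(2)] by (intro exI[of _ 1]) auto
  then show ?thesis
    unfolding is_zfs_def funpow_zf_step_eq_blue_at by (auto simp: star_V_def)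
qed

lemma zfs_star_at_most_one_white_leaf:
  assumes "is_zfs (star_V n) (star_E n) T"
  shows "card ({1..n} - T) \<le> 1"
proof (rule ccontr)
  assume "\<not> card ({1..n} - T) \<le> 1"
  then obtain a b where ab: "a \<in> {1..n} - T" "b \<in> {1..n} - T" "a \<noteq> b"
    by (metis card_le_Suc0_iff_eq finite_Diff finite_atLeastAtMost One_nat_def)
  have "a \<notin> (zf_step (star_V n) (star_E n) ^^ k) T \<and> b \<notin> (zf_step (star_V n) (star_E n) ^^ k) T" for k
  proof (induction k)
    case (Suc k)
    then show ?case
      using zf_step_star_two_white_leaves[of a n b] zf_step_star_two_white_leaves[of b n a] ab by auto
  qed (use ab in simp)
  moreover obtain k where "(zf_step (star_V n) (star_E n) ^^ k) T = star_V n"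
    using assms by (auto simp: is_zfs_def)
  ultimately have "a \<notin> star_V n"
    by metis
  then show False
    using ab by (simp add: star_V_def)
qed

lemma card_zfs_star:
  assumes n: "1 \<le> n" and zfs: "is_zfs (star_V n) (star_E n) T"
  shows "n - 1 \<le> card T"
    and "card T = n - 1 \<Longrightarrow> \<exists>i\<in>{1..n}. T = {1..n} - {i}"
proof -
  have T: "T \<subseteq> {0..n}"
    using zfs by (simp add: is_zfs_def star_V_def)
  then have "T = ({1..n} \<inter> T) \<union> (T \<inter> {0})"
    by auto
  also have "card \<dots> = card ({1..n} \<inter> T) + card (T \<inter> {0})"
    by (rule card_Un_disjoint) auto
  finally have card_T: "card T = card ({1..n} \<inter> T) + card (T \<inter> {0})" .
  have card_leaves: "n = card ({1..n} \<inter> T) + card ({1..n} - T)"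
    using card_Int_Diff[of "{1..n}" T] by simp
  show "n - 1 \<le> card T"
    using card_T card_leaves zfs_star_at_most_one_white_leaf[OF zfs] by linarith
  assume "card T = n - 1"
  with card_T card_leaves zfs_star_at_most_one_white_leaf[OF zfs] n
  have "card (T \<inter> {0}) = 0" and card_white: "card ({1..n} - T) = 1"
    by linarith+
  then have "0 \<notin> T"
    by simp
  obtain i where i: "{1..n} - T = {i}"
    using card_white card_1_singletonE by blast
  have "T \<subseteq> {1..n}"
  proof
    fix x
    assume "x \<in> T"
    then have "x \<noteq> 0"
      using \<open>0 \<notin> T\<close> by metis
    moreover have "x \<le> n"
      using \<open>x \<in> T\<close> T by auto
    ultimately show "x \<in> {1..n}"
      by simp
  qed
  with i have "T = {1..n} - {i}"
    by (metis double_diff order_refl)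
  with i show "\<exists>i\<in>{1..n}. T = {1..n} - {i}"
    by blast
qed

lemma zf_number_star:
  assumes "2 \<le> n"
  shows "zf_number (star_V n) (star_E n) = n - 1"
  unfolding zf_number_def
proof (rule Least_equality)
  show "\<exists>B. is_zfs (star_V n) (star_E n) B \<and> card B = n - 1"
    using assms is_zfs_star_leaves_but[OF assms, of 1] by (intro exI[of _ "{1..n} - {1}"]) auto
  show "n - 1 \<le> k" if "\<exists>B. is_zfs (star_V n) (star_E n) B \<and> card B = k" for k
    using that assms card_zfs_star(1) by fastforce
qed

lemma minimum_zfs_star:
  assumes "2 \<le> n"
  shows "{B. is_zfs (star_V n) (star_E n) B \<and> card B = zf_number (star_V n) (star_E n)} =
    (\<lambda>i. {1..n} - {i}) ` {1..n}"
proof -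
  have "1 \<le> n"
    using assms by simp
  then show ?thesis
    using card_zfs_star(2) is_zfs_star_leaves_but[OF assms]
    by (fastforce simp: zf_number_star[OF assms])
qed

definition no_success :: "'i set \<Rightarrow> ('i \<Rightarrow> bool) set" where
  "no_success J = {\<omega>. \<forall>x\<in>J. \<not> \<omega> x}"

lemma no_success_Un: "no_success (J \<union> K) = no_success J \<inter> no_success K"
  by (auto simp: no_success_def)

lemma no_success_antimono: "J \<subseteq> K \<Longrightarrow> no_success K \<subseteq> no_success J"
  by (auto simp: no_success_def)

lemma no_success_eq_prod_emb:
  fixes J :: "(nat \<times> 'a \<times> 'a) set" and w :: "'a \<Rightarrow> 'a \<Rightarrow> real"
  shows "no_success J =
    prod_emb UNIV (\<lambda>(k, u, v). measure_pmf (bernoulli_pmf (w u v))) J (\<Pi>\<^sub>E x\<in>J. {False})"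
  unfolding no_success_def
  by (rule set_eqI) (simp only: mem_Collect_eq prod_emb_iff restrict_PiE_iff, auto split: prod.split)

lemma sets_coin_space_no_success:
  fixes J :: "(nat \<times> 'a \<times> 'a) set" and w :: "'a \<Rightarrow> 'a \<Rightarrow> real"
  assumes "finite J"
  shows "no_success J \<in> sets (coin_space w)"
  unfolding coin_space_def no_success_eq_prod_emb[of J w]
  by (rule sets_PiM_I) (use assms in \<open>auto split: prod.split\<close>)

lemma emeasure_coin_space_no_success:
  fixes J :: "(nat \<times> 'a \<times> 'a) set" and w :: "'a \<Rightarrow> 'a \<Rightarrow> real"
  assumes "finite J" and "\<And>k u v. (k, u, v) \<in> J \<Longrightarrow> 0 \<le> w u v \<and> w u v \<le> 1"
  shows "emeasure (coin_space w) (no_success J) = ennreal (\<Prod>(k, u, v)\<in>J. 1 - w u v)"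
proof -
  have "emeasure (coin_space w) (no_success J) =
      (\<Prod>x\<in>J. emeasure ((\<lambda>(k, u, v). measure_pmf (bernoulli_pmf (w u v))) x) {False})"
    unfolding coin_space_def no_success_eq_prod_emb[of J w]
    by (rule emeasure_PiM_emb) (use assms(1) in \<open>auto split: prod.split simp: prob_space_measure_pmf\<close>)
  also have "\<dots> = (\<Prod>x\<in>J. ennreal (case x of (k, u, v) \<Rightarrow> 1 - w u v))"
    by (rule prod.cong) (use assms(2) in \<open>auto split: prod.split simp: emeasure_pmf_single\<close>)
  also have "\<dots> = ennreal (\<Prod>(k, u, v)\<in>J. 1 - w u v)"
    by (rule prod_ennreal) (use assms(2) in \<open>auto split: prod.split\<close>)
  finally show ?thesis .
qed

lemma prod_leaves_but_bounds:
  fixes ww :: "nat \<Rightarrow> real"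
  assumes ww: "\<And>j. 1 \<le> j \<Longrightarrow> j \<le> n \<Longrightarrow> 0 < ww j \<and> ww j < 1"
    and n: "2 \<le> n" and i: "i \<in> {1..n}"
  shows "0 \<le> (\<Prod>j\<in>{1..n} - {i}. 1 - ww j)" and "(\<Prod>j\<in>{1..n} - {i}. 1 - ww j) < 1"
proof -
  show "0 \<le> (\<Prod>j\<in>{1..n} - {i}. 1 - ww j)"
    by (intro prod_nonneg) (use ww in \<open>simp add: less_imp_le\<close>)
  have "(if i = 1 then 2 else 1) \<in> {1..n} - {i}"
    using n i by auto
  then show "(\<Prod>j\<in>{1..n} - {i}. 1 - ww j) < 1"
    by (rule prod_one_minus_less_one[rotated]) (use ww in auto)
qed

(* Coin (k, u, v) is the attempt of u on v in round k + 1: these are the attempts of the leaves in S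
   on the centre during the first r rounds, and of the centre on leaf i during rounds t + 1 .. t + m. *)
definition leaf_attempts :: "nat set \<Rightarrow> nat \<Rightarrow> (nat \<times> nat \<times> nat) set" where
  "leaf_attempts S r = {..<r} \<times> S \<times> {0}"

definition center_attempts :: "nat \<Rightarrow> nat \<Rightarrow> nat \<Rightarrow> (nat \<times> nat \<times> nat) set" where
  "center_attempts i t m = {t..<t + m} \<times> {0} \<times> {i}"

lemma mem_no_success_leaf_attempts:
  "\<omega> \<in> no_success (leaf_attempts S k) \<longleftrightarrow> (\<forall>r<k. \<not> (\<exists>j\<in>S. \<omega> (r, j, 0)))"
  by (auto simp: no_success_def leaf_attempts_def)

lemma mem_no_success_center_attempts:
  "\<omega> \<in> no_success (center_attempts i t m) \<longleftrightarrow> (\<forall>s<m. \<not> \<omega> (t + s, 0, i))"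
  by (auto simp: no_success_def center_attempts_def) (metis add_less_cancel_left le_add_diff_inverse)

lemma emeasure_star_no_success:
  assumes ww: "\<And>j. j \<in> {1..n} \<Longrightarrow> 0 \<le> ww j \<and> ww j \<le> 1" and i: "i \<in> {1..n}"
  defines "S \<equiv> {1..n} - {i}"
  shows "emeasure (coin_space (star_w ww)) (no_success (leaf_attempts S r \<union> center_attempts i t m)) =
    ennreal ((\<Prod>j\<in>S. 1 - ww j) ^ r * (1 - ww i) ^ m)"
proof -
  let ?f = "\<lambda>(k, u, v). 1 - star_w ww u v"
  have "0 \<notin> S"
    by (simp add: S_def)
  then have disjoint: "leaf_attempts S r \<inter> center_attempts i t m = {}"
    by (auto simp: leaf_attempts_def center_attempts_def)
  have leaves: "prod ?f (leaf_attempts S r) = (\<Prod>j\<in>S. 1 - ww j) ^ r"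
    using \<open>0 \<notin> S\<close> unfolding leaf_attempts_def
    by (auto simp: prod.cartesian_product[symmetric] star_w_def intro!: arg_cong[where f="\<lambda>x. x ^ r"] prod.cong)
  have center: "prod ?f (center_attempts i t m) = (1 - ww i) ^ m"
    by (simp add: center_attempts_def prod.cartesian_product[symmetric] star_w_def)
  have "emeasure (coin_space (star_w ww)) (no_success (leaf_attempts S r \<union> center_attempts i t m)) =
      ennreal (prod ?f (leaf_attempts S r \<union> center_attempts i t m))"
    by (rule emeasure_coin_space_no_success)
      (use ww i in \<open>auto simp: S_def star_w_def leaf_attempts_def center_attempts_def\<close>)
  also have "prod ?f (leaf_attempts S r \<union> center_attempts i t m) =
      prod ?f (leaf_attempts S r) * prod ?f (center_attempts i t m)"
    by (rule prod.union_disjoint) (auto simp: S_def disjoint leaf_attempts_def center_attempts_def)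
  finally show ?thesis
    by (simp only: leaves center)
qed

lemma emeasure_star_first_leaf_success:
  assumes ww: "\<And>j. j \<in> {1..n} \<Longrightarrow> 0 \<le> ww j \<and> ww j \<le> 1" and i: "i \<in> {1..n}"
  defines "S \<equiv> {1..n} - {i}"
  defines "W \<equiv> \<Prod>j\<in>S. 1 - ww j"
  shows "emeasure (coin_space (star_w ww))
      ((no_success (leaf_attempts S r) - no_success (leaf_attempts S (Suc r))) \<inter>
        no_success (center_attempts i t m)) =
    ennreal (W ^ r * (1 - W) * (1 - ww i) ^ m)"
proof -
  let ?M = "coin_space (star_w ww)"
  let ?E = "\<lambda>r. no_success (leaf_attempts S r \<union> center_attempts i t m)"
  have "finite S"
    by (simp add: S_def)
  then have sets: "?E r \<in> sets ?M" for r
    by (intro sets_coin_space_no_success) (simp add: leaf_attempts_def center_attempts_def)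
  have measure: "emeasure ?M (?E k) = ennreal (W ^ k * (1 - ww i) ^ m)" for k
    unfolding S_def W_def by (rule emeasure_star_no_success[OF ww i])
  have "(no_success (leaf_attempts S r) - no_success (leaf_attempts S (Suc r))) \<inter>
      no_success (center_attempts i t m) = ?E r - ?E (Suc r)"
    by (auto simp: no_success_Un)
  also have "emeasure ?M \<dots> = emeasure ?M (?E r) - emeasure ?M (?E (Suc r))"
  proof (rule emeasure_Diff)
    show "?E (Suc r) \<subseteq> ?E r"
      by (intro no_success_antimono) (auto simp: leaf_attempts_def)
  qed (simp_all add: sets measure)
  also have "\<dots> = ennreal (W ^ r * (1 - ww i) ^ m - W ^ Suc r * (1 - ww i) ^ m)"
  proof -
    have "0 \<le> W" "0 \<le> 1 - ww i"
      using ww i unfolding W_def S_def by (auto intro!: prod_nonneg)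
    then show ?thesis
      unfolding measure by (intro ennreal_minus) simp
  qed
  also have "W ^ r * (1 - ww i) ^ m - W ^ Suc r * (1 - ww i) ^ m = W ^ r * (1 - W) * (1 - ww i) ^ m"
    by (simp add: algebra_simps)
  finally show ?thesis .
qed

(* The first sum counts the rounds up to the first successful leaf attempt; the r-th inner sum is
   nonzero only if that success happens in round r + 1, and then counts the rounds until the centre
   forces i. *)
lemma ptw_star_eq_suminf_indicator:
  assumes "i \<in> {1..n}"
  defines "S \<equiv> {1..n} - {i}"
  shows "ptw (star_V n) (star_E n) S \<omega> =
    (\<Sum>k. indicator (no_success (leaf_attempts S k)) \<omega>) +
    (\<Sum>r. \<Sum>m. indicator ((no_success (leaf_attempts S r) - no_success (leaf_attempts S (Suc r))) \<inter>
                          no_success (center_attempts i (Suc r) m)) \<omega>)"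
proof -
  let ?a = "\<lambda>r. \<exists>j\<in>S. \<omega> (r, j, 0)"
  have first: "\<omega> \<in> no_success (leaf_attempts S r) - no_success (leaf_attempts S (Suc r)) \<longleftrightarrow>
      ?a r \<and> (\<forall>s<r. \<not> ?a s)" for r
    by (auto simp: mem_no_success_leaf_attempts less_Suc_eq)
  have "ptw (star_V n) (star_E n) S \<omega> =
      waiting_time ?a + (\<Sum>r. of_bool (?a r \<and> (\<forall>s<r. \<not> ?a s)) * waiting_time (\<lambda>m. \<omega> (Suc r + m, 0, i)))"
    unfolding S_def ptw_star_leaves_but[OF assms(1)] by (rule waiting_time_after_first)
  moreover have "indicator (no_success (leaf_attempts S k)) \<omega> = (of_bool (\<forall>r<k. \<not> ?a r) :: ennreal)" for k
    by (simp only: indicator_def mem_no_success_leaf_attempts)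
  moreover have "indicator ((no_success (leaf_attempts S r) - no_success (leaf_attempts S (Suc r))) \<inter>
        no_success (center_attempts i (Suc r) m)) \<omega> =
      (of_bool (?a r \<and> (\<forall>s<r. \<not> ?a s)) * of_bool (\<forall>s<m. \<not> \<omega> (Suc r + s, 0, i)) :: ennreal)"
    for r m
    unfolding indicator_def Int_iff first mem_no_success_center_attempts by (rule of_bool_conj)
  ultimately show ?thesis
    by (simp only: waiting_time_def ennreal_suminf_cmult)
qed

lemma eptw_set_star_leaves_but:
  assumes ww: "\<And>j. 1 \<le> j \<Longrightarrow> j \<le> n \<Longrightarrow> 0 < ww j \<and> ww j < 1"
    and n: "2 \<le> n" and i: "i \<in> {1..n}"
  shows "eptw_set (star_V n) (star_E n) (star_w ww) ({1..n} - {i}) =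
    ennreal (1 / ww i + 1 / (1 - (\<Prod>j\<in>{1..n} - {i}. 1 - ww j)))"
proof -
  define S where "S = {1..n} - {i}"
  define W where "W = (\<Prod>j\<in>S. 1 - ww j)"
  let ?M = "coin_space (star_w ww)"
  let ?A = "\<lambda>k. no_success (leaf_attempts S k)"
  let ?B = "\<lambda>r m. (?A r - ?A (Suc r)) \<inter> no_success (center_attempts i (Suc r) m)"
  have ww': "\<And>j. j \<in> {1..n} \<Longrightarrow> 0 \<le> ww j \<and> ww j \<le> 1"
    using ww by (simp add: less_imp_le)
  have "finite S"
    by (simp add: S_def)
  have "0 \<le> W" "W < 1"
    using prod_leaves_but_bounds[OF ww n i] by (simp_all add: W_def S_def)
  have sets_A: "?A k \<in> sets ?M" for k
    using \<open>finite S\<close> by (intro sets_coin_space_no_success) (simp add: leaf_attempts_def)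
  have sets_B: "?B r m \<in> sets ?M" for r m
    using sets_A \<open>finite S\<close>
    by (intro sets.Int sets.Diff sets_A sets_coin_space_no_success) (simp_all add: center_attempts_def)
  have measure_A: "emeasure ?M (?A k) = ennreal (W ^ k)" for k
    using emeasure_star_no_success[OF ww' i, where r = k and t = 0 and m = 0]
    by (simp add: S_def W_def center_attempts_def)
  have measure_B: "emeasure ?M (?B r m) = ennreal (W ^ r * (1 - W) * (1 - ww i) ^ m)" for r m
    unfolding S_def W_def by (rule emeasure_star_first_leaf_success[OF ww' i])
  have "eptw_set (star_V n) (star_E n) (star_w ww) S =
      (\<integral>\<^sup>+\<omega>. (\<Sum>k. indicator (?A k) \<omega>) \<partial>?M) + (\<integral>\<^sup>+\<omega>. (\<Sum>r. \<Sum>m. indicator (?B r m) \<omega>) \<partial>?M)"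
    unfolding eptw_set_def S_def ptw_star_eq_suminf_indicator[OF i]
    using sets_A sets_B by (intro nn_integral_add) (auto simp: S_def)
  also have "(\<integral>\<^sup>+\<omega>. (\<Sum>k. indicator (?A k) \<omega>) \<partial>?M) = (\<Sum>k. ennreal (W ^ k))"
    using sets_A measure_A by (subst nn_integral_suminf) auto
  also have "(\<integral>\<^sup>+\<omega>. (\<Sum>r. \<Sum>m. indicator (?B r m) \<omega>) \<partial>?M) =
      (\<Sum>r. \<Sum>m. ennreal (W ^ r * (1 - W) * (1 - ww i) ^ m))"
    using sets_B measure_B by (subst nn_integral_suminf, measurable, subst nn_integral_suminf) auto
  also have "(\<Sum>k. ennreal (W ^ k)) + \<dots> = ennreal (1 / ww i + 1 / (1 - W))"
    using \<open>0 \<le> W\<close> \<open>W < 1\<close> ww' ww i by (intro suminf_geometric_two_phases) auto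
  finally show ?thesis
    by (simp add: S_def W_def)
qed

theorem mainTheorem3:
  fixes n :: nat and ww :: "nat \<Rightarrow> real"
  assumes "n \<ge> 2"
    and "\<And>j. 1 \<le> j \<Longrightarrow> j \<le> n \<Longrightarrow> 0 < ww j \<and> ww j < 1"
  shows "eptw (star_V n) (star_E n) (star_w ww) =
    ennreal (Min ((\<lambda>i. 1 / ww i + 1 / (1 - (\<Prod>j\<in>{1..n} - {i}. 1 - ww j))) ` {1..n}))"
proof -
  define h where "h i = 1 / ww i + 1 / (1 - (\<Prod>j\<in>{1..n} - {i}. 1 - ww j))" for i
  have "{1..n} \<noteq> {}"
    using assms(1) by simp
  have "eptw (star_V n) (star_E n) (star_w ww) =
      (INF i \<in> {1..n}. eptw_set (star_V n) (star_E n) (star_w ww) ({1..n} - {i}))"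
    unfolding eptw_def minimum_zfs_star[OF assms(1)] by (simp add: image_image)
  also have "\<dots> = (INF i \<in> {1..n}. ennreal (h i))"
    unfolding h_def using eptw_set_star_leaves_but[OF assms(2,1)] by (intro INF_cong) auto
  also have "\<dots> = Min (ennreal ` h ` {1..n})"
    using \<open>{1..n} \<noteq> {}\<close> by (simp add: image_image cInf_eq_Min)
  also have "\<dots> = ennreal (Min (h ` {1..n}))"
    using \<open>{1..n} \<noteq> {}\<close> by (intro mono_Min_commute[symmetric]) (auto intro: monoI ennreal_leI)
  finally show ?thesis
    unfolding h_def .
qed

end
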